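(* Let $W_1\subseteq C_1^\omega$ and $W_2\subseteq C_2^\omega$ be prefix-independent objectives over disjoint sets of colours $C_1,C_2$, let $\kappa$ be a cardinal, and let $(U_1,\le_1)$ and $(U_2,\le_2)$ be well-monotone graphs which are respectively $(\kappa,W_1)$-universal and $(\kappa,W_2)$-universal for prefix-independent objectives. Then the lexicographical product $U_1\ltimes U_2$ is monotone and $(\kappa,W_1\ltimes W_2)$-universal for prefix-independent objectives.
   Context: A $D$-pregraph: vertex set $V(G)$, edges $E(G)\subseteq V(G)\times D\times V(G)$ written $v\xrightarrow{c}v'$; a $D$-graph if every vertex has an outgoing edge; a $D$-pretree is a $D$-pregraph with root $t_0$ such that each vertex has a unique path from $t_0$. A morphism maps vertices so edges go to edges of the same colour. A (pre)graph satisfies an objective $W$ if every infinite path from every vertex has colour sequence in $W$. $W$ is prefix-independent if $uw\in W\iff w\in W$. A $D$-graph $U$ is $(\kappa,W)$-universal for prefix-independent objectives if $U$ satisfies $W$ and every $D$-pretree of cardinality $<\kappa$ satisfying $W$ admits a morphism into $U$. A partially ordered graph is monotone if $u\ge v\xrightarrow{c}v'\ge u'$ implies $u\xrightarrow{c}u'$, well-monotone if moreover the order is well-founded. Let $C=C_1\sqcup C_2$. For $w\in C^\omega$ let $w^1,w^2$ be the subsequences of letters from $C_1$, resp. $C_2$. $W_1\ltimes W_2=\{w\in C^\omega: (w^2\text{ infinite and }w^2\in W_2)\text{ or }(w^2\text{ finite and }w^1\in W_1)\}$. For a $C_1$-graph $(U_1,\le_1)$ and a $C_2$-graph $(U_2,\le_2)$,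 $U=U_1\ltimes U_2$ is the $C$-graph on $V(U_1)\times V(U_2)$ ordered by $(u_1,u_2)\le(u_1',u_2')\iff u_2<_2u_2'$ or ($u_2=u_2'$ and $u_1\le_1u_1'$), with edges $(u_1,u_2)\xrightarrow{c_1}(u_1',u_2')$ for $c_1\in C_1$ whenever $u_2>_2u_2'$ or ($u_2=u_2'$ and $u_1\xrightarrow{c_1}u_1'\in E(U_1)$), and $(u_1,u_2)\xrightarrow{c_2}(u_1',u_2')$ for $c_2\in C_2$ whenever $u_2\xrightarrow{c_2}u_2'\in E(U_2)$. *)

theory Defs
  imports Main "HOL-Library.Infinite_Set"
begin

text \<open>D-pregraphs: a vertex set and a set of coloured edges. The set of colours D is the
  whole colour type.\<close>
record ('v, 'd) pregraph =
  verts :: "'v set"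
  edges :: "('v \<times> 'd \<times> 'v) set"

definition is_pregraph :: "('v, 'd) pregraph \<Rightarrow> bool" where
  "is_pregraph G \<longleftrightarrow> (\<forall>(v, c, v') \<in> edges G. v \<in> verts G \<and> v' \<in> verts G)"

definition is_graph :: "('v, 'd) pregraph \<Rightarrow> bool" where
  "is_graph G \<longleftrightarrow> is_pregraph G \<and> (\<forall>v \<in> verts G. \<exists>c v'. (v, c, v') \<in> edges G)"

fun fpath :: "('v, 'd) pregraph \<Rightarrow> 'v \<Rightarrow> ('v \<times> 'd \<times> 'v) list \<Rightarrow> 'v \<Rightarrow> bool" where
  "fpath G u [] v \<longleftrightarrow> u = v \<and> u \<in> verts G"
| "fpath G u ((a, c, b) # p) v \<longleftrightarrow> a = u \<and> (a, c, b) \<in> edges G \<and> fpath G b p v"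

definition is_pretree :: "('v, 'd) pregraph \<Rightarrow> 'v \<Rightarrow> bool" where
  "is_pretree T t0 \<longleftrightarrow> is_pregraph T \<and> t0 \<in> verts T \<and>
     (\<forall>v \<in> verts T. \<exists>!p. fpath T t0 p v)"

definition is_morphism :: "('v \<Rightarrow> 'w) \<Rightarrow> ('v, 'd) pregraph \<Rightarrow> ('w, 'd) pregraph \<Rightarrow> bool" where
  "is_morphism f G H \<longleftrightarrow> (\<forall>v \<in> verts G. f v \<in> verts H) \<and>
     (\<forall>(v, c, v') \<in> edges G. (f v, c, f v') \<in> edges H)"

definition satisfies :: "('v, 'd) pregraph \<Rightarrow> (nat \<Rightarrow> 'd) set \<Rightarrow> bool" where
  "satisfies G W \<longleftrightarrow> (\<forall>vs cs. (\<forall>i. (vs i, cs i, vs (Suc i)) \<in> edges G) \<longrightarrow> cs \<in> W)"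

definition prepend :: "'d list \<Rightarrow> (nat \<Rightarrow> 'd) \<Rightarrow> (nat \<Rightarrow> 'd)" where
  "prepend u w = (\<lambda>i. if i < length u then u ! i else w (i - length u))"

definition prefix_independent :: "(nat \<Rightarrow> 'd) set \<Rightarrow> bool" where
  "prefix_independent W \<longleftrightarrow> (\<forall>u w. prepend u w \<in> W \<longleftrightarrow> w \<in> W)"

text \<open>(kappa, W)-universality for prefix-independent objectives. kappa is a cardinal given as
  a (cardinal) well-order on the type 'k. Since morphism existence only depends on the
  isomorphism type of a pretree, and every set of cardinality < kappa injects into the
  field of kappa, it suffices (and is equivalent) to quantify over pretrees whose vertices
  are taken from the type 'k.\<close>
definition universal :: "'k rel \<Rightarrow> (nat \<Rightarrow> 'd) set \<Rightarrow> ('u, 'd) pregraph \<Rightarrow> bool" where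
  "universal \<kappa> W U \<longleftrightarrow> is_graph U \<and> satisfies U W \<and>
     (\<forall>(T :: ('k, 'd) pregraph) t0.
        is_pretree T t0 \<and> (card_of (verts T), \<kappa>) \<in> ordLess \<and> satisfies T W
        \<longrightarrow> (\<exists>f. is_morphism f T U))"

definition monotone_graph :: "('v, 'd) pregraph \<Rightarrow> 'v rel \<Rightarrow> bool" where
  "monotone_graph G R \<longleftrightarrow> partial_order_on (verts G) R \<and>
     (\<forall>u v v' u' c. (v, u) \<in> R \<and> (v, c, v') \<in> edges G \<and> (u', v') \<in> R
        \<longrightarrow> (u, c, u') \<in> edges G)"

definition well_monotone :: "('v, 'd) pregraph \<Rightarrow> 'v rel \<Rightarrow> bool" where
  "well_monotone G R \<longleftrightarrow> monotone_graph G R \<and> wf (R - Id)"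

text \<open>Colours C = C1 \<sqcup> C2 are represented by the sum type 'c1 + 'c2.
  w^1, w^2: subsequences of the C1- resp. C2-letters (only used when infinite).\<close>
definition sub1 :: "(nat \<Rightarrow> 'c1 + 'c2) \<Rightarrow> nat \<Rightarrow> 'c1" where
  "sub1 w n = projl (w (Infinite_Set.enumerate {i. isl (w i)} n))"

definition sub2 :: "(nat \<Rightarrow> 'c1 + 'c2) \<Rightarrow> nat \<Rightarrow> 'c2" where
  "sub2 w n = projr (w (Infinite_Set.enumerate {i. \<not> isl (w i)} n))"

definition lex_obj :: "(nat \<Rightarrow> 'c1) set \<Rightarrow> (nat \<Rightarrow> 'c2) set \<Rightarrow> (nat \<Rightarrow> 'c1 + 'c2) set" where
  "lex_obj W1 W2 = {w. (infinite {i. \<not> isl (w i)} \<and> sub2 w \<in> W2) \<or>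
                        (finite {i. \<not> isl (w i)} \<and> sub1 w \<in> W1)}"

definition lex_graph :: "('v1, 'c1) pregraph \<Rightarrow> 'v1 rel \<Rightarrow> ('v2, 'c2) pregraph \<Rightarrow> 'v2 rel
    \<Rightarrow> ('v1 \<times> 'v2, 'c1 + 'c2) pregraph" where
  "lex_graph U1 R1 U2 R2 =
     \<lparr> verts = verts U1 \<times> verts U2,
       edges = {((u1, u2), Inl c1, (u1', u2')) | u1 u2 c1 u1' u2'.
                  (u1, u2) \<in> verts U1 \<times> verts U2 \<and> (u1', u2') \<in> verts U1 \<times> verts U2 \<and>
                  (((u2', u2) \<in> R2 \<and> u2' \<noteq> u2) \<or> (u2 = u2' \<and> (u1, c1, u1') \<in> edges U1))}
             \<union> {((u1, u2), Inr c2, (u1', u2')) | u1 u2 c2 u1' u2'.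
                  (u1, u2) \<in> verts U1 \<times> verts U2 \<and> (u1', u2') \<in> verts U1 \<times> verts U2 \<and>
                  (u2, c2, u2') \<in> edges U2} \<rparr>"

definition lex_order :: "('v1, 'c1) pregraph \<Rightarrow> 'v1 rel \<Rightarrow> ('v2, 'c2) pregraph \<Rightarrow> 'v2 rel
    \<Rightarrow> ('v1 \<times> 'v2) rel" where
  "lex_order U1 R1 U2 R2 =
     {((u1, u2), (u1', u2')) | u1 u2 u1' u2'.
        (u1, u2) \<in> verts U1 \<times> verts U2 \<and> (u1', u2') \<in> verts U1 \<times> verts U2 \<and>
        (((u2, u2') \<in> R2 \<and> u2 \<noteq> u2') \<or> (u2 = u2' \<and> (u1, u1') \<in> R1))}"

end

theory Submission
  imports Defs
begin

text \<open>Monotonicity of the lexicographic product is inherited coordinatewise. Along a path of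
  the product the second coordinate can only decrease on \<open>C1\<close>-edges. If infinitely many
  \<open>C2\<close>-edges occur, monotonicity of \<open>U2\<close> lets each \<open>C2\<close>-edge absorb the \<open>C1\<close>-descent following
  it, giving a path of \<open>U2\<close> labelled by the \<open>C2\<close>-subsequence. Otherwise the second coordinate
  eventually stabilises by well-foundedness, from then on the first coordinate follows a path
  of \<open>U1\<close>, and prefix-independence of \<open>W1\<close> concludes.

  For universality, cut a pretree \<open>T\<close> at its \<open>C2\<close>-edges. Each vertex belongs to the
  \<open>C1\<close>-block of its block root, the target of the last \<open>C2\<close>-edge on its root path (or the
  root). The blocks are pretrees satisfying \<open>W1\<close>; contracting every block to its root gives a
  \<open>C2\<close>-pretree satisfying \<open>W2\<close>, since its paths lift to paths of \<open>T\<close> with the same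
  \<open>C2\<close>-letters. Morphisms \<open>f1\<close> of the blocks into \<open>U1\<close> and \<open>f2\<close> of the contracted tree into
  \<open>U2\<close> combine into the morphism \<open>v \<mapsto> (f1 v, f2 (block root of v))\<close> into the product.\<close>

lemma enumerate_gap_notin:
  fixes S :: "nat set"
  assumes "infinite S" "enumerate S n < m" "m < enumerate S (Suc n)"
  shows "m \<notin> S"
  using assms enumerate_Suc''[OF assms(1), of n] not_less_Least by fastforce

lemma enumerate_eventually_shift:
  fixes S :: "nat set"
  assumes inf: "infinite S" and tail: "{M..} \<subseteq> S"
  shows "\<exists>k. \<forall>n. enumerate S (k + n) = M + n"
proof -
  obtain k where k: "enumerate S k = M" using enumerate_Ex[OF inf] tail by blast
  have "enumerate S (k + n) = M + n" for n
  proof (induction n)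
    case 0
    then show ?case using k by simp
  next
    case (Suc n)
    have "enumerate S (Suc (k + n)) = (LEAST s. s \<in> S \<and> enumerate S (k + n) < s)"
      using enumerate_Suc''[OF inf] by blast
    also have "\<dots> = M + Suc n"
      using Suc tail by (intro Least_equality) auto
    finally show ?case by simp
  qed
  then show ?thesis by blast
qed

lemma enumerate_range_strict_mono:
  fixes f :: "nat \<Rightarrow> nat"
  assumes "strict_mono f"
  shows "enumerate (range f) = f"
proof
  have inf: "infinite (range f)"
    using assms strict_mono_imp_inj_on range_inj_infinite by blast
  fix n
  show "enumerate (range f) n = f n"
  proof (induction n)
    case 0
    have "(LEAST n. n \<in> range f) = f 0"
      using assms by (intro Least_equality) (auto simp: strict_mono_less_eq)
    then show ?case by (simp add: enumerate_0)
  next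
    case (Suc n)
    have "enumerate (range f) (Suc n) = (LEAST s. s \<in> range f \<and> enumerate (range f) n < s)"
      using enumerate_Suc''[OF inf] by blast
    also have "\<dots> = f (Suc n)"
      using Suc assms
      by (intro Least_equality) (auto simp: strict_mono_less strict_mono_less_eq Suc_le_eq)
    finally show ?case .
  qed
qed

lemma sub1_Inl: "sub1 (\<lambda>i. Inl (w i)) = w"
proof -
  have "enumerate (range id) = id"
    by (rule enumerate_range_strict_mono) (simp add: strict_mono_def)
  then show ?thesis by (simp add: sub1_def fun_eq_iff)
qed

lemma sub1_eventually_Inl:
  assumes "\<forall>i\<ge>M. isl (w i)"
  shows "\<exists>k. \<forall>n. sub1 w (k + n) = projl (w (M + n))"
proof -
  have "{M..} \<subseteq> {i. isl (w i)}" using assms by auto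
  moreover then have "infinite {i. isl (w i)}" using infinite_Ici finite_subset by blast
  ultimately obtain k where "\<forall>n. enumerate {i. isl (w i)} (k + n) = M + n"
    using enumerate_eventually_shift by blast
  then show ?thesis unfolding sub1_def by metis
qed

lemma sub2_range_strict_mono:
  assumes "strict_mono f" and "{i. \<not> isl (w i)} = range f"
  shows "sub2 w n = projr (w (f n))"
  using assms by (simp add: sub2_def enumerate_range_strict_mono)

lemma prefix_independent_suffixD:
  assumes "prefix_independent W" and "(\<lambda>n. w (k + n)) \<in> W"
  shows "w \<in> W"
proof -
  have "prepend (map w [0..<k]) (\<lambda>n. w (k + n)) = w"
    by (simp add: prepend_def fun_eq_iff)
  then show ?thesis using assms by (metis prefix_independent_def)
qed

lemma wf_descending_eventually_constant:
  assumes wf: "wf (R - Id)" and desc: "\<forall>i\<ge>N. (y (Suc i), y i) \<in> R"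
  shows "\<exists>M\<ge>N. \<forall>n\<ge>M. y n = y M"
proof -
  obtain z where z: "z \<in> y ` {N..}" and min: "\<forall>u. (u, z) \<in> R - Id \<longrightarrow> u \<notin> y ` {N..}"
    using wfE_min[OF wf, of "y N" "y ` {N..}"] by blast
  obtain M where M: "M \<ge> N" "z = y M" using z by blast
  have "y (M + k) = y M" for k
  proof (induction k)
    case (Suc k)
    have "(y (Suc (M + k)), y M) \<in> R" using desc M Suc by (metis le_add1 order_trans)
    moreover have "y (Suc (M + k)) \<in> y ` {N..}" using M by simp
    ultimately show ?case using min M by auto
  qed simp
  then show ?thesis using M by (metis le_add_diff_inverse)
qed

lemma monotone_graph_lower_target:
  assumes "monotone_graph G R" "u \<in> verts G" "(u, c, v) \<in> edges G" "(v', v) \<in> R"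
  shows "(u, c, v') \<in> edges G"
  using assms unfolding monotone_graph_def partial_order_on_def preorder_on_def refl_on_def
  by blast

section \<open>The lexicographic product\<close>

lemma lex_order_iff:
  "((a, b), (a', b')) \<in> lex_order U1 R1 U2 R2 \<longleftrightarrow>
    a \<in> verts U1 \<and> b \<in> verts U2 \<and> a' \<in> verts U1 \<and> b' \<in> verts U2 \<and>
    ((b, b') \<in> R2 \<and> b \<noteq> b' \<or> b = b' \<and> (a, a') \<in> R1)"
  by (auto simp: lex_order_def)

lemma lex_edge_Inl_iff:
  "((a, b), Inl c, (a', b')) \<in> edges (lex_graph U1 R1 U2 R2) \<longleftrightarrow>
    a \<in> verts U1 \<and> b \<in> verts U2 \<and> a' \<in> verts U1 \<and> b' \<in> verts U2 \<and>
    ((b', b) \<in> R2 \<and> b' \<noteq> b \<or> b = b' \<and> (a, c, a') \<in> edges U1)"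
  by (auto simp: lex_graph_def)

lemma lex_edge_Inr_iff:
  "((a, b), Inr c, (a', b')) \<in> edges (lex_graph U1 R1 U2 R2) \<longleftrightarrow>
    a \<in> verts U1 \<and> b \<in> verts U2 \<and> a' \<in> verts U1 \<and> b' \<in> verts U2 \<and> (b, c, b') \<in> edges U2"
  by (auto simp: lex_graph_def)

lemma lex_order_partial_order:
  assumes po1: "partial_order_on (verts U1) R1" and po2: "partial_order_on (verts U2) R2"
  shows "partial_order_on (verts (lex_graph U1 R1 U2 R2)) (lex_order U1 R1 U2 R2)"
proof -
  note P1 = partial_order_onD[OF po1] and P2 = partial_order_onD[OF po2]
  show ?thesis
    unfolding partial_order_on_def preorder_on_def
  proof (intro conjI)
    show "lex_order U1 R1 U2 R2 \<subseteq> verts (lex_graph U1 R1 U2 R2) \<times> verts (lex_graph U1 R1 U2 R2)"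
      by (auto simp: lex_order_def lex_graph_def)
    show "refl_on (verts (lex_graph U1 R1 U2 R2)) (lex_order U1 R1 U2 R2)"
      using P1(1) by (auto simp: lex_order_def lex_graph_def refl_on_def)
    show "trans (lex_order U1 R1 U2 R2)"
      unfolding trans_def lex_order_def using P1(2) P2(2,3)
      by clarsimp (metis antisymD transD)
    show "antisym (lex_order U1 R1 U2 R2)"
      unfolding antisym_def lex_order_def using P1(3) P2(3) by (auto dest: antisymD)
  qed
qed

lemma lex_graph_monotone:
  assumes m1: "monotone_graph U1 R1" and m2: "monotone_graph U2 R2"
  shows "monotone_graph (lex_graph U1 R1 U2 R2) (lex_order U1 R1 U2 R2)"
  unfolding monotone_graph_def
proof (intro conjI allI impI)
  have po1: "partial_order_on (verts U1) R1" and po2: "partial_order_on (verts U2) R2"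
    using m1 m2 by (auto simp: monotone_graph_def)
  then show "partial_order_on (verts (lex_graph U1 R1 U2 R2)) (lex_order U1 R1 U2 R2)"
    by (rule lex_order_partial_order)
  note P2 = partial_order_onD[OF po2]
  fix u v v' u' c
  assume "(v, u) \<in> lex_order U1 R1 U2 R2 \<and> (v, c, v') \<in> edges (lex_graph U1 R1 U2 R2) \<and>
    (u', v') \<in> lex_order U1 R1 U2 R2"
  moreover obtain v1 v2 u1 u2 v1' v2' u1' u2'
    where eq: "v = (v1, v2)" "u = (u1, u2)" "v' = (v1', v2')" "u' = (u1', u2')"
    by (metis prod.exhaust)
  ultimately have vu: "(v2, u2) \<in> R2 \<and> v2 \<noteq> u2 \<or> v2 = u2 \<and> (v1, u1) \<in> R1"
    and uv': "(u2', v2') \<in> R2 \<and> u2' \<noteq> v2' \<or> u2' = v2' \<and> (u1', v1') \<in> R1"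
    and verts: "u1 \<in> verts U1" "u2 \<in> verts U2" "u1' \<in> verts U1" "u2' \<in> verts U2"
    and edge: "(v, c, v') \<in> edges (lex_graph U1 R1 U2 R2)"
    by (auto simp: lex_order_iff)
  have vu2: "(v2, u2) \<in> R2" and uv2: "(u2', v2') \<in> R2"
    using vu uv' P2(1) verts by (auto simp: refl_on_def)
  show "(u, c, u') \<in> edges (lex_graph U1 R1 U2 R2)"
  proof (cases c)
    case (Inr c2)
    then have "(v2, c2, v2') \<in> edges U2" using edge by (simp add: eq lex_edge_Inr_iff)
    then have "(u2, c2, u2') \<in> edges U2" using m2 vu2 uv2 unfolding monotone_graph_def by blast
    then show ?thesis using verts Inr by (simp add: eq lex_edge_Inr_iff)
  next
    case (Inl c1)
    then have e: "(v2', v2) \<in> R2 \<and> v2' \<noteq> v2 \<or> v2 = v2' \<and> (v1, c1, v1') \<in> edges U1"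
      using edge by (simp add: eq lex_edge_Inl_iff)
    show ?thesis
    proof (cases "u2' = u2")
      case False
      have "(u2', u2) \<in> R2" using e vu2 uv2 P2(2) by (meson transD)
      then show ?thesis using False verts Inl by (simp add: eq lex_edge_Inl_iff)
    next
      case True
      \<comment> \<open>then \<open>u2 \<le> v2' \<le> v2 \<le> u2\<close>, so the second coordinates all agree\<close>
      then have "v2 = u2" "v2' = u2" using e vu2 uv2 P2(2,3) by (metis antisymD transD)+
      then have "(u1, c1, u1') \<in> edges U1"
        using vu uv' e True m1 unfolding monotone_graph_def by blast
      then show ?thesis using True verts Inl by (simp add: eq lex_edge_Inl_iff)
    qed
  qed
qed

lemma lex_graph_is_graph:
  assumes "is_graph U1" "is_graph U2"
  shows "is_graph (lex_graph U1 R1 U2 R2)"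
  unfolding is_graph_def is_pregraph_def
proof (intro conjI ballI)
  show "case e of (v, c, v') \<Rightarrow> v \<in> verts (lex_graph U1 R1 U2 R2) \<and> v' \<in> verts (lex_graph U1 R1 U2 R2)"
    if "e \<in> edges (lex_graph U1 R1 U2 R2)" for e
    using that by (auto simp: lex_graph_def)
  fix v assume "v \<in> verts (lex_graph U1 R1 U2 R2)"
  then obtain a b where ab: "v = (a, b)" "a \<in> verts U1" "b \<in> verts U2" by (auto simp: lex_graph_def)
  then obtain c a' where "(a, c, a') \<in> edges U1" "a' \<in> verts U1"
    using assms(1) unfolding is_graph_def is_pregraph_def by blast
  then have "(v, Inl c, (a', b)) \<in> edges (lex_graph U1 R1 U2 R2)"
    using ab by (simp add: lex_edge_Inl_iff)
  then show "\<exists>c v'. (v, c, v') \<in> edges (lex_graph U1 R1 U2 R2)" by blast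
qed

lemma lex_edge_isl_snd:
  assumes "refl_on (verts U2) R2" and "(v, c, v') \<in> edges (lex_graph U1 R1 U2 R2)" and "isl c"
  shows "(snd v', snd v) \<in> R2"
  using assms by (auto simp: lex_graph_def refl_on_def)

lemma lex_edge_isl_fst:
  assumes "(v, c, v') \<in> edges (lex_graph U1 R1 U2 R2)" and "isl c" and "snd v = snd v'"
  shows "(fst v, projl c, fst v') \<in> edges U1"
  using assms by (auto simp: lex_graph_def)

lemma lex_edge_not_isl_snd:
  assumes "(v, c, v') \<in> edges (lex_graph U1 R1 U2 R2)" and "\<not> isl c"
  shows "snd v \<in> verts U2 \<and> (snd v, projr c, snd v') \<in> edges U2"
  using assms by (auto simp: lex_graph_def)

lemma lex_path_infinitely_many_Inr:
  assumes m2: "monotone_graph U2 R2" and s2: "satisfies U2 W2"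
    and path: "\<forall>i. (vs i, cs i, vs (Suc i)) \<in> edges (lex_graph U1 R1 U2 R2)"
    and inf: "infinite {i. \<not> isl (cs i)}"
  shows "sub2 cs \<in> W2"
proof -
  define p where "p = enumerate {i. \<not> isl (cs i)}"
  define y where "y i = snd (vs i)" for i
  have refl: "refl_on (verts U2) R2"
    using m2 by (simp add: monotone_graph_def partial_order_on_def preorder_on_def)
  have Inl_step: "(y (Suc i), y i) \<in> R2" if "isl (cs i)" for i
    using lex_edge_isl_snd[OF refl path[rule_format] that] by (simp add: y_def)
  have Inr_step: "y i \<in> verts U2 \<and> (y i, projr (cs i), y (Suc i)) \<in> edges U2"
    if "\<not> isl (cs i)" for i
    using lex_edge_not_isl_snd[OF path[rule_format] that] by (simp add: y_def)
  have p_Inr: "\<not> isl (cs (p n))" for n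
    using enumerate_in_set[OF inf] by (simp add: p_def)
  have "(y (p n), projr (cs (p n)), y j) \<in> edges U2" if "Suc (p n) \<le> j" "j \<le> p (Suc n)" for n j
    using that
  proof (induction j rule: dec_induct)
    case base
    show ?case using Inr_step p_Inr by blast
  next
    case (step j)
    then have "isl (cs j)"
      using enumerate_gap_notin[OF inf, of n j] by (simp add: p_def)
    then have "(y (Suc j), y j) \<in> R2" by (rule Inl_step)
    moreover have "y (p n) \<in> verts U2" using Inr_step p_Inr by blast
    moreover have "(y (p n), projr (cs (p n)), y j) \<in> edges U2"
      using step.IH step.prems by simp
    ultimately show ?case using monotone_graph_lower_target[OF m2] by blast
  qed
  then have "(y (p n), projr (cs (p n)), y (p (Suc n))) \<in> edges U2" for n
    using enumerate_step[OF inf] by (simp add: p_def Suc_le_eq)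
  then have "(\<lambda>n. projr (cs (p n))) \<in> W2"
    using s2[unfolded satisfies_def, rule_format, of "\<lambda>n. y (p n)" "\<lambda>n. projr (cs (p n))"]
    by simp
  then show ?thesis by (simp add: sub2_def[abs_def] p_def)
qed

lemma lex_path_finitely_many_Inr:
  assumes wm2: "well_monotone U2 R2" and s1: "satisfies U1 W1" and pi1: "prefix_independent W1"
    and path: "\<forall>i. (vs i, cs i, vs (Suc i)) \<in> edges (lex_graph U1 R1 U2 R2)"
    and fin: "finite {i. \<not> isl (cs i)}"
  shows "sub1 cs \<in> W1"
proof -
  define y where "y i = snd (vs i)" for i
  have refl: "refl_on (verts U2) R2"
    using wm2 by (simp add: well_monotone_def monotone_graph_def partial_order_on_def preorder_on_def)
  obtain N where "{i. \<not> isl (cs i)} \<subseteq> {..<N}"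
    using finite_nat_bounded[OF fin] by blast
  then have N: "\<forall>i\<ge>N. isl (cs i)" by auto
  have "\<forall>i\<ge>N. (y (Suc i), y i) \<in> R2"
    using lex_edge_isl_snd[OF refl path[rule_format]] N by (simp add: y_def)
  moreover have "wf (R2 - Id)" using wm2 by (simp add: well_monotone_def)
  ultimately obtain M where M: "M \<ge> N" "\<forall>n\<ge>M. y n = y M"
    using wf_descending_eventually_constant by blast
  have "(fst (vs (M + n)), projl (cs (M + n)), fst (vs (Suc (M + n)))) \<in> edges U1" for n
  proof (rule lex_edge_isl_fst[OF path[rule_format]])
    show "isl (cs (M + n))" using N M(1) by simp
    have "y (M + n) = y (Suc (M + n))" using M(2) by (metis le_add1 le_SucI)
    then show "snd (vs (M + n)) = snd (vs (Suc (M + n)))" by (simp add: y_def)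
  qed
  then have "(\<lambda>n. projl (cs (M + n))) \<in> W1"
    using s1[unfolded satisfies_def, rule_format, of "\<lambda>n. fst (vs (M + n))"] by simp
  moreover obtain k where "\<forall>n. sub1 cs (k + n) = projl (cs (M + n))"
    using sub1_eventually_Inl[of M cs] N M(1) by auto
  ultimately show ?thesis
    using prefix_independent_suffixD[OF pi1, of "sub1 cs" k] by simp
qed

lemma lex_graph_satisfies:
  assumes wm2: "well_monotone U2 R2" and "satisfies U1 W1" and "satisfies U2 W2"
    and "prefix_independent W1"
  shows "satisfies (lex_graph U1 R1 U2 R2) (lex_obj W1 W2)"
  unfolding satisfies_def
proof (intro allI impI)
  fix vs cs
  assume path: "\<forall>i. (vs i, cs i, vs (Suc i)) \<in> edges (lex_graph U1 R1 U2 R2)"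
  have m2: "monotone_graph U2 R2" using wm2 by (simp add: well_monotone_def)
  show "cs \<in> lex_obj W1 W2"
  proof (cases "finite {i. \<not> isl (cs i)}")
    case True
    then show ?thesis
      using lex_path_finitely_many_Inr[OF wm2 _ _ path] assms by (simp add: lex_obj_def)
  next
    case False
    then show ?thesis
      using lex_path_infinitely_many_Inr[OF m2 _ path] assms by (simp add: lex_obj_def)
  qed
qed

section \<open>Finite paths and pretrees\<close>

lemma fpath_append:
  assumes "is_pregraph G"
  shows "fpath G u (p @ q) v \<longleftrightarrow> (\<exists>w. fpath G u p w \<and> fpath G w q v)"
proof (induction p arbitrary: u)
  case Nil
  have "u \<in> verts G" if "fpath G u q v"
    using that assms by (cases q) (auto simp: is_pregraph_def)
  then show ?case by auto
next
  case (Cons e p)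
  then show ?case by (cases e) auto
qed

lemma fpath_snoc:
  assumes "is_pregraph G"
  shows "fpath G u (p @ [(a, c, b)]) v \<longleftrightarrow>
    fpath G u p a \<and> (a, c, b) \<in> edges G \<and> b = v \<and> b \<in> verts G"
  by (auto simp: fpath_append[OF assms])

lemma fpath_endpoints_in_verts:
  assumes "is_pregraph G" and "fpath G u p v"
  shows "u \<in> verts G \<and> v \<in> verts G"
  using assms(2)
proof (induction p arbitrary: u)
  case (Cons e p)
  then show ?case using assms(1) by (cases e) (auto simp: is_pregraph_def)
qed simp

lemma fpath_nth:
  assumes "fpath G u p v" and "j < length p"
  shows "p ! j \<in> edges G \<and> (j = 0 \<longrightarrow> fst (p ! j) = u) \<and>
    (Suc j < length p \<longrightarrow> snd (snd (p ! j)) = fst (p ! Suc j)) \<and>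
    (Suc j = length p \<longrightarrow> snd (snd (p ! j)) = v)"
  using assms
proof (induction p arbitrary: u j)
  case (Cons e p)
  obtain a c b where e: "e = (a, c, b)" by (cases e)
  show ?case
  proof (cases j)
    case 0
    then show ?thesis using Cons.prems e by (cases p) auto
  next
    case (Suc j')
    then have "fpath G b p v" "j' < length p" using Cons.prems e by auto
    from Cons.IH[OF this] show ?thesis
      unfolding Suc nth_Cons_Suc length_Cons Suc_less_eq Suc_inject by blast
  qed
qed simp

lemma is_pretreeI:
  fixes rank :: "'v \<Rightarrow> nat"
  assumes pg: "is_pregraph G" and root: "r \<in> verts G"
    and no_in: "\<And>a c. (a, c, r) \<notin> edges G"
    and ex_in: "\<And>v. v \<in> verts G \<Longrightarrow> v \<noteq> r \<Longrightarrow> \<exists>a c. (a, c, v) \<in> edges G"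
    and uniq_in: "\<And>a c v a' c'. (a, c, v) \<in> edges G \<Longrightarrow> (a', c', v) \<in> edges G \<Longrightarrow> a = a' \<and> c = c'"
    and rank: "\<And>a c b. (a, c, b) \<in> edges G \<Longrightarrow> rank a < rank b"
  shows "is_pretree G r"
proof -
  have "\<exists>p. fpath G r p v" if "v \<in> verts G" for v
    using that
  proof (induction "rank v" arbitrary: v rule: less_induct)
    case less
    show ?case
    proof (cases "v = r")
      case True
      then show ?thesis using root by (intro exI[of _ "[]"]) simp
    next
      case False
      then obtain a c where e: "(a, c, v) \<in> edges G" using ex_in less.prems by blast
      then have "a \<in> verts G" using pg by (auto simp: is_pregraph_def)
      then obtain p where "fpath G r p a" using less.hyps[OF rank[OF e]] by blast
      then have "fpath G r (p @ [(a, c, v)]) v" using e less.prems by (simp add: fpath_snoc[OF pg])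
      then show ?thesis by blast
    qed
  qed
  moreover have "p = p'" if "fpath G r p v" "fpath G r p' v" for p p' v
    using that
  proof (induction p arbitrary: p' v rule: rev_induct)
    case Nil
    then show ?case
      using no_in by (cases p' rule: rev_exhaust) (auto simp: fpath_snoc[OF pg])
  next
    case (snoc e p)
    obtain a c b where e: "e = (a, c, b)" by (cases e)
    then have p: "fpath G r p a" "(a, c, v) \<in> edges G"
      using snoc.prems by (auto simp: fpath_snoc[OF pg])
    show ?case
    proof (cases p' rule: rev_exhaust)
      case Nil
      then show ?thesis using snoc.prems p no_in by simp
    next
      case (snoc q' e')
      obtain a' c' b' where e': "e' = (a', c', b')" by (cases e')
      then have p': "fpath G r q' a'" "(a', c', v) \<in> edges G"
        using snoc.prems snoc by (auto simp: fpath_snoc[OF pg])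
      then have "a = a'" "c = c'" using uniq_in p(2) by blast+
      moreover have "p = q'" using snoc.IH p p' calculation by blast
      ultimately show ?thesis using snoc snoc.prems e e' by (auto simp: fpath_snoc[OF pg])
    qed
  qed
  ultimately show ?thesis unfolding is_pretree_def using pg root by blast
qed

section \<open>Infinite concatenation of finite paths\<close>

definition iconcat_start :: "(nat \<Rightarrow> 'a list) \<Rightarrow> nat \<Rightarrow> nat" where
  "iconcat_start L i = (\<Sum>j<i. length (L j))"

definition iconcat_block :: "(nat \<Rightarrow> 'a list) \<Rightarrow> nat \<Rightarrow> nat" where
  "iconcat_block L n = (LEAST i. n < iconcat_start L (Suc i))"

definition iconcat :: "(nat \<Rightarrow> 'a list) \<Rightarrow> nat \<Rightarrow> 'a" where
  "iconcat L n = L (iconcat_block L n) ! (n - iconcat_start L (iconcat_block L n))"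

lemma iconcat_start_0 [simp]: "iconcat_start L 0 = 0"
  by (simp add: iconcat_start_def)

lemma iconcat_start_Suc [simp]: "iconcat_start L (Suc i) = iconcat_start L i + length (L i)"
  by (simp add: iconcat_start_def)

lemma iconcat_start_mono: "i \<le> i' \<Longrightarrow> iconcat_start L i \<le> iconcat_start L i'"
  unfolding iconcat_start_def by (rule sum_mono2) auto

lemma iconcat_nth:
  assumes "j < length (L i)"
  shows "iconcat L (iconcat_start L i + j) = L i ! j"
proof -
  have "iconcat_block L (iconcat_start L i + j) = i"
    unfolding iconcat_block_def
  proof (rule Least_equality)
    show "iconcat_start L i + j < iconcat_start L (Suc i)" using assms by simp
    show "i \<le> i'" if "iconcat_start L i + j < iconcat_start L (Suc i')" for i'
      using that iconcat_start_mono[of "Suc i'" i L]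
      by (meson not_less_eq_eq not_add_less1 order_less_le_trans)
  qed
  then show ?thesis by (simp add: iconcat_def)
qed

lemma iconcat_decomp:
  assumes ne: "\<forall>i. L i \<noteq> []"
  obtains i j where "j < length (L i)" "n = iconcat_start L i + j"
proof -
  define i where "i = iconcat_block L n"
  have "k \<le> iconcat_start L k" for k
  proof (induction k)
    case (Suc k)
    have "0 < length (L k)" using ne by simp
    then show ?case using Suc by (simp only: iconcat_start_Suc)
  qed simp
  then have "n < iconcat_start L (Suc n)" by (meson Suc_le_eq)
  then have upper: "n < iconcat_start L (Suc i)"
    unfolding i_def iconcat_block_def by (rule LeastI)
  have lower: "iconcat_start L i \<le> n"
  proof (cases i)
    case (Suc k)
    then have "\<not> n < iconcat_start L (Suc k)"
      unfolding i_def iconcat_block_def by (metis lessI not_less_Least)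
    then show ?thesis using Suc by simp
  qed simp
  show ?thesis using that[of "n - iconcat_start L i" i] upper lower by simp
qed

lemma fpath_iconcat:
  assumes paths: "\<And>i. fpath G (xs i) (L i) (xs (Suc i))" and ne: "\<forall>i. L i \<noteq> []"
  shows "(fst (iconcat L n), fst (snd (iconcat L n)), fst (iconcat L (Suc n))) \<in> edges G"
proof -
  obtain i j where ij: "j < length (L i)" "n = iconcat_start L i + j"
    using iconcat_decomp[OF ne] .
  note step = fpath_nth[OF paths[of i] ij(1)]
  have "snd (snd (iconcat L n)) = fst (iconcat L (Suc n))"
  proof (cases "Suc j < length (L i)")
    case True
    then show ?thesis using step ij iconcat_nth[of "Suc j" L i] iconcat_nth[of j L i] by simp
  next
    case False
    then have last: "Suc j = length (L i)" using ij by simp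
    have first: "0 < length (L (Suc i))" using ne by simp
    have "Suc n = iconcat_start L (Suc i) + 0" using ij last by simp
    then have "iconcat L (Suc n) = L (Suc i) ! 0" using iconcat_nth[of 0 L "Suc i"] first by simp
    moreover have "fst (L (Suc i) ! 0) = xs (Suc i)" using fpath_nth[OF paths first] by simp
    ultimately show ?thesis using step last iconcat_nth[of j L i] ij by simp
  qed
  moreover have "iconcat L n \<in> edges G" using step iconcat_nth[of j L i] ij by simp
  ultimately show ?thesis by (metis prod.collapse)
qed

lemma iconcat_snoc_positions:
  assumes L_def: "\<And>i. L i = q i @ [e i]"
    and q_P: "\<forall>i. \<forall>x\<in>set (q i). P x" and e_not_P: "\<forall>i. \<not> P (e i)"
  defines "f \<equiv> \<lambda>i. iconcat_start L i + length (q i)"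
  shows "strict_mono f" and "iconcat L (f i) = e i" and "{n. \<not> P (iconcat L n)} = range f"
proof -
  show "strict_mono f" unfolding strict_mono_Suc_iff by (simp add: f_def L_def)
  show at_f: "iconcat L (f i) = e i" for i
    using iconcat_nth[of "length (q i)" L i] by (simp add: f_def L_def)
  show "{n. \<not> P (iconcat L n)} = range f"
  proof (intro equalityI subsetI)
    fix n assume "n \<in> {n. \<not> P (iconcat L n)}"
    moreover have "\<forall>i. L i \<noteq> []" by (simp add: L_def)
    then obtain i j where ij: "j < length (L i)" "n = iconcat_start L i + j"
      by (rule iconcat_decomp)
    ultimately have "\<not> j < length (q i)"
      using q_P iconcat_nth[of j L i] by (simp add: L_def nth_append) (metis nth_mem)
    then have "n = f i" using ij by (simp add: f_def L_def)
    then show "n \<in> range f" by simp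
  qed (use at_f e_not_P in auto)
qed

locale pretree =
  fixes T :: "('v, 'd) pregraph" and root :: 'v
  assumes is_pretree: "is_pretree T root"
begin

lemma is_pregraph: "is_pregraph T"
  using is_pretree by (simp add: is_pretree_def)

lemma root_in_verts: "root \<in> verts T"
  using is_pretree by (simp add: is_pretree_def)

lemma edge_in_verts: "(a, c, b) \<in> edges T \<Longrightarrow> a \<in> verts T \<and> b \<in> verts T"
  using is_pregraph by (auto simp: is_pregraph_def)

definition root_path :: "'v \<Rightarrow> ('v \<times> 'd \<times> 'v) list" where
  "root_path v = (THE p. fpath T root p v)"

lemma fpath_root_path: "v \<in> verts T \<Longrightarrow> fpath T root (root_path v) v"
  unfolding root_path_def using is_pretree by (simp add: is_pretree_def) (metis theI')

lemma root_path_unique: "fpath T root p v \<Longrightarrow> root_path v = p"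
  using is_pretree fpath_root_path fpath_endpoints_in_verts[OF is_pregraph]
  unfolding is_pretree_def by blast

lemma root_path_root: "root_path root = []"
  using root_in_verts by (intro root_path_unique) simp

lemma root_path_edge: "(a, c, b) \<in> edges T \<Longrightarrow> root_path b = root_path a @ [(a, c, b)]"
  using fpath_root_path edge_in_verts by (intro root_path_unique) (simp add: fpath_snoc[OF is_pregraph])

lemma no_edge_to_root: "(a, c, root) \<notin> edges T"
  using root_path_edge root_path_root by fastforce

lemma in_edge_unique:
  assumes "(a, c, v) \<in> edges T" and "(a', c', v) \<in> edges T"
  shows "a = a' \<and> c = c'"
  using root_path_edge[OF assms(1)] root_path_edge[OF assms(2)] by simp

lemma in_edge_exists:
  assumes "v \<in> verts T" and "v \<noteq> root"
  shows "\<exists>a c. (a, c, v) \<in> edges T"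
proof (cases "root_path v" rule: rev_exhaust)
  case Nil
  then show ?thesis using fpath_root_path[OF assms(1)] assms(2) by simp
next
  case (snoc p e)
  then show ?thesis
    using fpath_root_path[OF assms(1)] by (cases e) (auto simp: fpath_snoc[OF is_pregraph])
qed

end

section \<open>Cutting a pretree at its \<open>C2\<close>-edges\<close>

locale lex_pretree = pretree T root for T :: "('v, 'c1 + 'c2) pregraph" and root
begin

definition last_jump :: "('v \<times> ('c1 + 'c2) \<times> 'v) list \<Rightarrow> 'v" where
  "last_jump p = foldl (\<lambda>r (a, c, b). if isl c then r else b) root p"

definition block_root :: "'v \<Rightarrow> 'v" where
  "block_root v = last_jump (root_path v)"

definition jump_tree :: "('v, 'c2) pregraph" where
  "jump_tree = \<lparr>verts = block_root ` verts T,
     edges = {(block_root a, c, b) | a c b. (a, Inr c, b) \<in> edges T}\<rparr>"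

definition block :: "'v \<Rightarrow> ('v, 'c1) pregraph" where
  "block r = \<lparr>verts = {v \<in> verts T. block_root v = r},
     edges = {(a, c, b) | a c b. (a, Inl c, b) \<in> edges T \<and> block_root a = r}\<rparr>"

lemma block_root_root: "block_root root = root"
  by (simp add: block_root_def last_jump_def root_path_root)

lemma block_root_edge: "(a, c, b) \<in> edges T \<Longrightarrow> block_root b = (if isl c then block_root a else b)"
  by (simp add: block_root_def last_jump_def root_path_edge)

lemma last_jump_cases:
  "fpath T root p v \<Longrightarrow> last_jump p = root \<or> (\<exists>a c. (a, Inr c, last_jump p) \<in> edges T)"
proof (induction p arbitrary: v rule: rev_induct)
  case (snoc e p)
  obtain a c b where e: "e = (a, c, b)" by (cases e)
  then have "fpath T root p a" "(a, c, b) \<in> edges T"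
    using snoc.prems by (auto simp: fpath_snoc[OF is_pregraph])
  then show ?case using snoc.IH e by (cases c) (auto simp: last_jump_def)
qed (simp add: last_jump_def)

lemma block_root_cases:
  "v \<in> verts T \<Longrightarrow> block_root v = root \<or> (\<exists>a c. (a, Inr c, block_root v) \<in> edges T)"
  unfolding block_root_def by (rule last_jump_cases[OF fpath_root_path])

lemma fpath_from_last_jump:
  "fpath T root p v \<Longrightarrow> \<exists>q. fpath T (last_jump p) q v \<and> (\<forall>e\<in>set q. isl (fst (snd e)))"
proof (induction p arbitrary: v rule: rev_induct)
  case Nil
  moreover have "last_jump [] = root" by (simp add: last_jump_def)
  ultimately show ?case by (intro exI[of _ "[]"]) auto
next
  case (snoc e p)
  obtain a c b where e: "e = (a, c, b)" by (cases e)
  then have h: "fpath T root p a" "(a, c, b) \<in> edges T" "b = v" "b \<in> verts T"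
    using snoc.prems by (auto simp: fpath_snoc[OF is_pregraph])
  show ?case
  proof (cases "isl c")
    case True
    obtain q where q: "fpath T (last_jump p) q a" "\<forall>e\<in>set q. isl (fst (snd e))"
      using snoc.IH[OF h(1)] by blast
    then have "fpath T (last_jump p) (q @ [(a, c, b)]) v" using h by (simp add: fpath_snoc[OF is_pregraph])
    then show ?thesis using q True e by (intro exI[of _ "q @ [(a, c, b)]"]) (auto simp: last_jump_def)
  next
    case False
    then show ?thesis using h e by (intro exI[of _ "[]"]) (auto simp: last_jump_def)
  qed
qed

lemma root_path_through_block_root:
  assumes "v \<in> verts T"
  obtains q where "fpath T (block_root v) q v" and "\<forall>e\<in>set q. isl (fst (snd e))"
    and "root_path v = root_path (block_root v) @ q"
proof -
  obtain q where q: "fpath T (block_root v) q v" "\<forall>e\<in>set q. isl (fst (snd e))"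
    using fpath_from_last_jump[OF fpath_root_path[OF assms]] by (auto simp: block_root_def)
  moreover have "block_root v \<in> verts T"
    using q(1) fpath_endpoints_in_verts[OF is_pregraph] by blast
  then have "fpath T root (root_path (block_root v) @ q) v"
    using q(1) fpath_root_path by (auto simp: fpath_append[OF is_pregraph])
  ultimately show ?thesis using that root_path_unique by metis
qed

lemma block_root_in_verts: "v \<in> verts T \<Longrightarrow> block_root v \<in> verts T"
  by (metis root_path_through_block_root fpath_endpoints_in_verts[OF is_pregraph])

lemma block_root_idem: "v \<in> verts T \<Longrightarrow> block_root (block_root v) = block_root v"
  using block_root_cases block_root_edge block_root_root by fastforce

lemma jump_tree_is_pretree: "is_pretree jump_tree root"
proof (rule is_pretreeI[where rank = "\<lambda>v. length (root_path v)"])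
  show "is_pregraph jump_tree"
    unfolding is_pregraph_def
  proof (intro ballI)
    fix x assume "x \<in> edges jump_tree"
    then obtain a c b where x: "x = (block_root a, c, b)" and e: "(a, Inr c, b) \<in> edges T"
      by (auto simp: jump_tree_def)
    have "b = block_root b" using block_root_edge[OF e] by simp
    then show "case x of (v, c, v') \<Rightarrow> v \<in> verts jump_tree \<and> v' \<in> verts jump_tree"
      using edge_in_verts[OF e] unfolding x jump_tree_def by auto
  qed
  show "root \<in> verts jump_tree"
    unfolding jump_tree_def using root_in_verts block_root_root by force
  show "(a, c, root) \<notin> edges jump_tree" for a c
    unfolding jump_tree_def using no_edge_to_root by auto
  show "\<exists>a c. (a, c, v) \<in> edges jump_tree" if v: "v \<in> verts jump_tree" "v \<noteq> root" for v
  proof -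
    obtain u where "u \<in> verts T" "v = block_root u" using v(1) by (auto simp: jump_tree_def)
    then obtain a c where "(a, Inr c, v) \<in> edges T" using block_root_cases v(2) by blast
    then show ?thesis unfolding jump_tree_def by auto
  qed
  show "a = a' \<and> c = c'" if in_edges: "(a, c, v) \<in> edges jump_tree" "(a', c', v) \<in> edges jump_tree"
    for a c v a' c'
  proof -
    obtain t t' where "a = block_root t" "(t, Inr c, v) \<in> edges T"
      and "a' = block_root t'" "(t', Inr c', v) \<in> edges T"
      using in_edges by (auto simp: jump_tree_def)
    then show ?thesis using in_edge_unique by blast
  qed
  show "length (root_path a) < length (root_path b)" if edge: "(a, c, b) \<in> edges jump_tree" for a c b
  proof -
    obtain t where t: "a = block_root t" "(t, Inr c, b) \<in> edges T"
      using edge by (auto simp: jump_tree_def)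
    moreover have "t \<in> verts T" using edge_in_verts[OF t(2)] by simp
    ultimately obtain q where "root_path t = root_path a @ q"
      using root_path_through_block_root by blast
    then show ?thesis using root_path_edge[OF t(2)] by simp
  qed
qed

lemma block_is_pretree:
  assumes r: "r \<in> block_root ` verts T"
  shows "is_pretree (block r) r"
proof (rule is_pretreeI[where rank = "\<lambda>v. length (root_path v)"])
  have r_block_root: "r \<in> verts T" "block_root r = r"
    using r block_root_in_verts block_root_idem by auto
  show "is_pregraph (block r)"
    unfolding is_pregraph_def block_def using edge_in_verts block_root_edge by fastforce
  show "r \<in> verts (block r)" unfolding block_def using r_block_root by simp
  show "(a, c, r) \<notin> edges (block r)" for a c
  proof
    assume "(a, c, r) \<in> edges (block r)"
    then have "(a, Inl c, r) \<in> edges T" by (auto simp: block_def)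
    moreover have "r = root \<or> (\<exists>a c. (a, Inr c, r) \<in> edges T)"
      using block_root_cases r by auto
    ultimately show False using no_edge_to_root in_edge_unique by blast
  qed
  show "\<exists>a c. (a, c, v) \<in> edges (block r)" if v_block: "v \<in> verts (block r)" and "v \<noteq> r" for v
  proof -
    have v: "v \<in> verts T" "block_root v = r" using v_block by (auto simp: block_def)
    with \<open>v \<noteq> r\<close> obtain a c where e: "(a, c, v) \<in> edges T"
      using in_edge_exists block_root_root by metis
    have "isl c"
    proof (rule ccontr)
      assume "\<not> isl c"
      then have "block_root v = v" using block_root_edge[OF e] by simp
      then show False using v \<open>v \<noteq> r\<close> by simp
    qed
    then show ?thesis
      using e block_root_edge[OF e] v unfolding block_def by (cases c) auto
  qed
  show "a = a' \<and> c = c'" if "(a, c, v) \<in> edges (block r)" "(a', c', v) \<in> edges (block r)"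
    for a c v a' c'
  proof -
    have "(a, Inl c, v) \<in> edges T" "(a', Inl c', v) \<in> edges T"
      using that by (auto simp: block_def)
    then show ?thesis using in_edge_unique by blast
  qed
  show "length (root_path a) < length (root_path b)" if "(a, c, b) \<in> edges (block r)" for a c b
    using that root_path_edge by (auto simp: block_def)
qed

lemma block_satisfies:
  assumes "satisfies T (lex_obj W1 W2)"
  shows "satisfies (block r) W1"
  unfolding satisfies_def
proof (intro allI impI)
  fix vs cs
  assume "\<forall>i. (vs i, cs i, vs (Suc i)) \<in> edges (block r)"
  then have "\<forall>i. (vs i, Inl (cs i), vs (Suc i)) \<in> edges T" by (auto simp: block_def)
  then have "(\<lambda>i. Inl (cs i)) \<in> lex_obj W1 W2"
    using assms[unfolded satisfies_def, rule_format, of vs "\<lambda>i. Inl (cs i)"] by simp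
  then show "cs \<in> W1" by (simp add: lex_obj_def sub1_Inl)
qed

text \<open>A path of the jump tree lifts to a path of \<open>T\<close> by inserting, before each \<open>C2\<close>-edge,
  the \<open>C1\<close>-path inside the block leading to its source.\<close>
lemma jump_tree_satisfies:
  assumes sat: "satisfies T (lex_obj W1 W2)"
  shows "satisfies jump_tree W2"
  unfolding satisfies_def
proof (intro allI impI)
  fix vs cs
  assume "\<forall>i. (vs i, cs i, vs (Suc i)) \<in> edges jump_tree"
  then have "\<forall>i. \<exists>t. vs i = block_root t \<and> (t, Inr (cs i), vs (Suc i)) \<in> edges T"
    by (auto simp: jump_tree_def)
  then obtain t where t: "\<And>i. vs i = block_root (t i)" "\<And>i. (t i, Inr (cs i), vs (Suc i)) \<in> edges T"
    by metis
  have "\<forall>i. \<exists>q. fpath T (vs i) q (t i) \<and> (\<forall>e\<in>set q. isl (fst (snd e)))"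
    using root_path_through_block_root edge_in_verts t by metis
  then obtain q where q: "\<And>i. fpath T (vs i) (q i) (t i)" "\<forall>i. \<forall>e\<in>set (q i). isl (fst (snd e))"
    by metis
  define e where "e i = (t i, Inr (cs i) :: 'c1 + 'c2, vs (Suc i))" for i
  define L where "L i = q i @ [e i]" for i
  have "fpath T (vs i) (L i) (vs (Suc i))" for i
    using q(1) t(2)[of i] edge_in_verts[OF t(2)[of i]]
    by (auto simp: L_def e_def fpath_snoc[OF is_pregraph])
  moreover have "\<forall>i. L i \<noteq> []" by (simp add: L_def)
  ultimately have "(fst (iconcat L n), fst (snd (iconcat L n)), fst (iconcat L (Suc n))) \<in> edges T"
    for n by (rule fpath_iconcat)
  then have lex: "(\<lambda>n. fst (snd (iconcat L n))) \<in> lex_obj W1 W2"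
    using sat[unfolded satisfies_def, rule_format, of "\<lambda>n. fst (iconcat L n)"] by simp
  have "\<forall>i. \<not> isl (fst (snd (e i)))" by (simp add: e_def)
  note positions = iconcat_snoc_positions[of L q e, OF L_def q(2) this]
  have "infinite {n. \<not> isl (fst (snd (iconcat L n)))}"
    unfolding positions(3) using positions(1) strict_mono_imp_inj_on range_inj_infinite by blast
  moreover have "sub2 (\<lambda>n. fst (snd (iconcat L n))) = cs"
  proof
    fix n show "sub2 (\<lambda>n. fst (snd (iconcat L n))) n = cs n"
      using sub2_range_strict_mono[OF positions(1,3)] positions(2) by (simp add: e_def)
  qed
  ultimately show "cs \<in> W2" using lex by (simp add: lex_obj_def)
qed

lemma morphism_into_lex_graph:
  assumes f2: "is_morphism f2 jump_tree U2"
    and f1: "\<And>r. r \<in> block_root ` verts T \<Longrightarrow> is_morphism (f1 r) (block r) U1"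
  shows "is_morphism (\<lambda>v. (f1 (block_root v) v, f2 (block_root v))) T (lex_graph U1 R1 U2 R2)"
proof -
  have verts: "f1 (block_root v) v \<in> verts U1 \<and> f2 (block_root v) \<in> verts U2" if "v \<in> verts T" for v
    using that f1[of "block_root v"] f2
    unfolding is_morphism_def block_def jump_tree_def by auto
  show ?thesis
    unfolding is_morphism_def
  proof (intro conjI ballI)
    show "(f1 (block_root v) v, f2 (block_root v)) \<in> verts (lex_graph U1 R1 U2 R2)"
      if "v \<in> verts T" for v
      using verts[OF that] by (simp add: lex_graph_def)
    fix x assume "x \<in> edges T"
    then obtain a c b where e: "x = (a, c, b)" "(a, c, b) \<in> edges T" by (metis prod.exhaust)
    note ab = edge_in_verts[OF e(2)]
    show "case x of (v, c, v') \<Rightarrow>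
      ((f1 (block_root v) v, f2 (block_root v)), c, (f1 (block_root v') v', f2 (block_root v')))
        \<in> edges (lex_graph U1 R1 U2 R2)"
    proof (cases c)
      case (Inl c1)
      then have "(a, c1, b) \<in> edges (block (block_root a))" using e(2) by (simp add: block_def)
      then have "(f1 (block_root a) a, c1, f1 (block_root a) b) \<in> edges U1"
        using f1 ab unfolding is_morphism_def by blast
      moreover have "block_root b = block_root a" using block_root_edge[OF e(2)] Inl by simp
      ultimately show ?thesis using Inl e verts[of a] verts[of b] ab by (simp add: lex_edge_Inl_iff)
    next
      case (Inr c2)
      then have "(block_root a, c2, b) \<in> edges jump_tree" using e(2) by (auto simp: jump_tree_def)
      then have "(f2 (block_root a), c2, f2 b) \<in> edges U2" using f2 unfolding is_morphism_def by blast
      moreover have "block_root b = b" using block_root_edge[OF e(2)] Inr by simp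
      ultimately show ?thesis using Inr e verts[of a] verts[of b] ab by (simp add: lex_edge_Inr_iff)
    qed
  qed
qed

lemma exists_morphism_into_lex_graph:
  fixes \<kappa> :: "'v rel" \<comment> \<open>\<open>universal \<kappa>\<close> only speaks about pretrees on the carrier type of \<open>\<kappa>\<close>\<close>
  assumes sat: "satisfies T (lex_obj W1 W2)" and card: "(card_of (verts T), \<kappa>) \<in> ordLess"
    and u1: "universal \<kappa> W1 U1" and u2: "universal \<kappa> W2 U2"
  shows "\<exists>f. is_morphism f T (lex_graph U1 R1 U2 R2)"
proof -
  have small: "(card_of A, \<kappa>) \<in> ordLess" if "A \<subseteq> verts T" for A
    using ordLeq_ordLess_trans[OF card_of_mono1[OF that] card] .
  have morphism_from_small_pretree: "\<exists>f. is_morphism f S U"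
    if "universal \<kappa> W U" "is_pretree S r" "verts S \<subseteq> verts T" "satisfies S W"
    for S :: "('v, 'c) pregraph" and r W and U :: "('u, 'c) pregraph"
    using that small[OF that(3)] unfolding universal_def by blast
  have "verts jump_tree \<subseteq> verts T" using block_root_in_verts by (auto simp: jump_tree_def)
  then obtain f2 where "is_morphism f2 jump_tree U2"
    using morphism_from_small_pretree[OF u2 jump_tree_is_pretree] jump_tree_satisfies[OF sat] by blast
  moreover have "\<forall>r \<in> block_root ` verts T. \<exists>h. is_morphism h (block r) U1"
  proof
    fix r assume "r \<in> block_root ` verts T"
    moreover have "verts (block r) \<subseteq> verts T" by (auto simp: block_def)
    ultimately show "\<exists>h. is_morphism h (block r) U1"
      using morphism_from_small_pretree[OF u1 block_is_pretree] block_satisfies[OF sat] by blast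
  qed
  then obtain f1 where "\<And>r. r \<in> block_root ` verts T \<Longrightarrow> is_morphism (f1 r) (block r) U1"
    by metis
  ultimately have "is_morphism (\<lambda>v. (f1 (block_root v) v, f2 (block_root v))) T (lex_graph U1 R1 U2 R2)"
    by (rule morphism_into_lex_graph)
  then show ?thesis by blast
qed

end

theorem theorem6p3:
  fixes W1 :: "(nat \<Rightarrow> 'c1) set" and W2 :: "(nat \<Rightarrow> 'c2) set"
    and \<kappa> :: "'k rel"
    and U1 :: "('v1, 'c1) pregraph" and R1 :: "'v1 rel"
    and U2 :: "('v2, 'c2) pregraph" and R2 :: "'v2 rel"
  assumes "prefix_independent W1" and "prefix_independent W2"
    and "Card_order \<kappa>"
    and "well_monotone U1 R1" and "well_monotone U2 R2"
    and "universal \<kappa> W1 U1" and "universal \<kappa> W2 U2"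
  shows "monotone_graph (lex_graph U1 R1 U2 R2) (lex_order U1 R1 U2 R2)
       \<and> universal \<kappa> (lex_obj W1 W2) (lex_graph U1 R1 U2 R2)"
proof
  have "monotone_graph U1 R1" and "monotone_graph U2 R2"
    using assms(4,5) by (simp_all add: well_monotone_def)
  then show "monotone_graph (lex_graph U1 R1 U2 R2) (lex_order U1 R1 U2 R2)"
    by (rule lex_graph_monotone)
  have "is_graph U1" "satisfies U1 W1" "is_graph U2" "satisfies U2 W2"
    using assms(6,7) by (simp_all add: universal_def)
  show "universal \<kappa> (lex_obj W1 W2) (lex_graph U1 R1 U2 R2)"
    unfolding universal_def
  proof (intro conjI allI impI)
    show "is_graph (lex_graph U1 R1 U2 R2)"
      by (rule lex_graph_is_graph) fact+
    show "satisfies (lex_graph U1 R1 U2 R2) (lex_obj W1 W2)"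
      by (rule lex_graph_satisfies) fact+
    fix T :: "('k, 'c1 + 'c2) pregraph" and t0
    assume T: "is_pretree T t0 \<and> (card_of (verts T), \<kappa>) \<in> ordLess \<and> satisfies T (lex_obj W1 W2)"
    then interpret lex_pretree T t0 by unfold_locales simp
    show "\<exists>f. is_morphism f T (lex_graph U1 R1 U2 R2)"
      using exists_morphism_into_lex_graph T assms(6,7) by blast
  qed
qed

end
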